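(* Let $\rho$ be a fermionic state of $\mathsf{L}_\mathsf{F}$, $N\ge1$ and $\varepsilon>0$. The projector $P_{N,\varepsilon}(\rho)$ onto the $\varepsilon$-typical subspace of $\rho$ is (the Jordan–Wigner representative of) the Kraus operator of an admissible fermionic transformation on $\mathsf{L}_\mathsf{F}^{\boxtimes N}$.
   Context: A system $\mathsf{L}_\mathsf{F}$ of $L$ local fermionic modes is described by field operators $\varphi_1,\dots,\varphi_L$ with canonical anticommutation relations; the Jordan–Wigner isomorphism $J$ identifies the Fock basis $(\varphi_1^\dagger)^{n_1}\cdots(\varphi_L^\dagger)^{n_L}|\Omega\rangle$ with the computational basis of $L$ qubits, with $J(\varphi_i)=(\bigotimes_{l<i}\sigma^z_l)\otimes\sigma^-_i\otimes(\bigotimes_{k>i}I_k)$, extended linearly and multiplicatively. Fermionic states $\rho$ are linear combinations of products of an even number of field operators with $J(\rho)\geq0$ block-diagonal in the even/odd total-occupation subspaces; $\rho^{\boxtimes N}$ is the $N$-copy state, with $J(\rho^{\boxtimes N})=J(\rho)^{\otimes N}$. Admissible fermionic transformations are completely positive maps whose Kraus operators each are linear combinations of products of field operators with either all an even or all an odd number of factors. Typical subspace: let $J(\rho)=\sum_i p_i|x_i\rangle\langle x_i|$ be an orthonormal eigendecomposition, $X$ the random variable with values $x_i$ and probabilities $p_i$, and $S_f(\rho)=-\sum_ip_i\log_2p_i$. For a sequence $\mathbf{i}=(i_1,\dots,i_N)$ let $|x_{\mathbf{i}}\rangle=|x_{i_1}\rangle\otimes\cdots\otimes|x_{i_N}\rangle$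 and $p_{\mathbf{i}}=\prod_jp_{i_j}$; the sequence is $\varepsilon$-typical if $|\frac1N\log_2\frac{1}{p_{\mathbf{i}}}-S_f(\rho)|\leq\varepsilon$. Then $P_{N,\varepsilon}(\rho):=\sum_{\mathbf{i}\ \varepsilon\text{-typical}}|x_{\mathbf{i}}\rangle\langle x_{\mathbf{i}}|$. *)

theory Defs
  imports Complex_Main "Jordan_Normal_Form.Matrix"
begin

text \<open>Operators on n qubits (equivalently, via Jordan-Wigner, on n fermionic modes) are
complex 2^n x 2^n matrices. The computational basis index x < 2^n encodes the occupation
numbers: the occupation of mode k (k < n, mode 1 of the paper is k = 0) is the
(n-1-k)-th binary digit of x, so mode 0 is the most significant bit. With this convention
the Kronecker product of states of copies 1,...,N agrees with the natural mode ordering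
of the N*L-mode system.\<close>

definition occ :: "nat \<Rightarrow> nat \<Rightarrow> nat \<Rightarrow> bool" where
  "occ n k x \<longleftrightarrow> odd (x div 2 ^ (n - 1 - k))"

text \<open>Jordan-Wigner image of the annihilation operator of mode i:
 (sigma^z on modes l < i) tensor sigma^- on mode i tensor identities, with
 sigma^z |m> = (-1)^m |m> and sigma^- = |0><1|.\<close>
definition field_op :: "nat \<Rightarrow> nat \<Rightarrow> complex mat" where
  "field_op n i = mat (2 ^ n) (2 ^ n) (\<lambda>(x, y).
     if occ n i y \<and> x + 2 ^ (n - 1 - i) = y
     then (-1) ^ card {l. l < i \<and> occ n l y} else 0)"

definition adj :: "complex mat \<Rightarrow> complex mat" where
  "adj A = mat (dim_col A) (dim_row A) (\<lambda>(i, j). cnj (A $$ (j, i)))"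

definition field :: "nat \<Rightarrow> nat \<times> bool \<Rightarrow> complex mat" where
  "field n f = (if snd f then adj (field_op n (fst f)) else field_op n (fst f))"

definition field_prod :: "nat \<Rightarrow> (nat \<times> bool) list \<Rightarrow> complex mat" where
  "field_prod n w = foldr (\<lambda>f M. field n f * M) w (1\<^sub>m (2 ^ n))"

definition parity_ops :: "nat \<Rightarrow> bool \<Rightarrow> complex mat set" where
  "parity_ops n b = {M. \<exists>cws :: (complex \<times> (nat \<times> bool) list) list.
      (\<forall>(c, w) \<in> set cws. (\<forall>f \<in> set w. fst f < n) \<and> even (length w) = b) \<and>
      M = foldr (\<lambda>(c, w) S. c \<cdot>\<^sub>m field_prod n w + S) cws (0\<^sub>m (2 ^ n) (2 ^ n))}"

definition even_ops :: "nat \<Rightarrow> complex mat set" where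
  "even_ops n = parity_ops n True"

definition odd_ops :: "nat \<Rightarrow> complex mat set" where
  "odd_ops n = parity_ops n False"

definition parity :: "nat \<Rightarrow> nat \<Rightarrow> bool" where
  "parity n x = even (card {k. k < n \<and> occ n k x})"

definition psd :: "complex mat \<Rightarrow> nat \<Rightarrow> bool" where
  "psd A d \<longleftrightarrow> A \<in> carrier_mat d d \<and> adj A = A \<and>
     (\<forall>v \<in> carrier_vec d. Re (conjugate v \<bullet> (A *\<^sub>v v)) \<ge> 0)"

definition fermionic_state :: "nat \<Rightarrow> complex mat \<Rightarrow> bool" where
  "fermionic_state L \<rho> \<longleftrightarrow> \<rho> \<in> even_ops L \<and> psd \<rho> (2 ^ L) \<and> (\<Sum>i<2 ^ L. \<rho> $$ (i, i)) = 1 \<and>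
     (\<forall>x < 2 ^ L. \<forall>y < 2 ^ L. parity L x \<noteq> parity L y \<longrightarrow> \<rho> $$ (x, y) = 0)"

definition outer :: "complex vec \<Rightarrow> complex mat" where
  "outer v = mat (dim_vec v) (dim_vec v) (\<lambda>(i, j). v $ i * cnj (v $ j))"

definition eigendecomp :: "nat \<Rightarrow> complex mat \<Rightarrow> (nat \<Rightarrow> real) \<Rightarrow> (nat \<Rightarrow> complex vec) \<Rightarrow> bool" where
  "eigendecomp d \<rho> p x \<longleftrightarrow>
     (\<forall>i < d. x i \<in> carrier_vec d) \<and>
     (\<forall>i < d. \<forall>j < d. conjugate (x j) \<bullet> x i = (if i = j then 1 else 0)) \<and>
     \<rho> = foldr (\<lambda>i S. complex_of_real (p i) \<cdot>\<^sub>m outer (x i) + S) [0..<d] (0\<^sub>m d d)"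

definition entropy_f :: "nat \<Rightarrow> (nat \<Rightarrow> real) \<Rightarrow> real" where
  "entropy_f d p = - (\<Sum>i<d. p i * log 2 (p i))"

definition seq_prob :: "(nat \<Rightarrow> real) \<Rightarrow> nat list \<Rightarrow> real" where
  "seq_prob p is = (\<Prod>j<length is. p (is ! j))"

text \<open>A sequence is eps-typical; p_i > 0 is made explicit since log2(1/0) = +infinity
mathematically (sequences of probability 0 are never typical).\<close>
definition typical :: "nat \<Rightarrow> (nat \<Rightarrow> real) \<Rightarrow> nat \<Rightarrow> real \<Rightarrow> nat list \<Rightarrow> bool" where
  "typical d p N \<epsilon> is \<longleftrightarrow> seq_prob p is > 0 \<and>
     \<bar>(1 / real N) * log 2 (1 / seq_prob p is) - entropy_f d p\<bar> \<le> \<epsilon>"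

definition kron_vec :: "complex vec \<Rightarrow> complex vec \<Rightarrow> complex vec" where
  "kron_vec u v = vec (dim_vec u * dim_vec v)
     (\<lambda>k. u $ (k div dim_vec v) * v $ (k mod dim_vec v))"

definition tensor_seq :: "(nat \<Rightarrow> complex vec) \<Rightarrow> nat list \<Rightarrow> complex vec" where
  "tensor_seq x is = foldr (\<lambda>i v. kron_vec (x i) v) is (vec 1 (\<lambda>_. 1))"

definition typical_proj :: "nat \<Rightarrow> (nat \<Rightarrow> real) \<Rightarrow> (nat \<Rightarrow> complex vec) \<Rightarrow> nat \<Rightarrow> real \<Rightarrow> complex mat" where
  "typical_proj d p x N \<epsilon> =
     (let D = d ^ N;
          seqs = filter (typical d p N \<epsilon>) (List.n_lists N [0..<d])
      in foldr (\<lambda>is S. outer (tensor_seq x is) + S) seqs (0\<^sub>m D D))"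

text \<open>An admissible fermionic transformation on n modes, given by its (finite) list of
Kraus operators X \<mapsto> sum_k K_k X K_k^dagger (completely positive by construction); each
Kraus operator is a linear combination of products of field operators with all an even
or all an odd number of factors.\<close>
definition admissible_kraus :: "nat \<Rightarrow> complex mat list \<Rightarrow> bool" where
  "admissible_kraus n Ks \<longleftrightarrow> (\<forall>K \<in> set Ks. K \<in> even_ops n \<or> K \<in> odd_ops n)"

end

theory Submission
  imports Defs
begin

text \<open>
  The typical projector has vanishing entries between basis states of different parity, and
  every such operator is a linear combination of even products of field operators.

  For the first claim: J(\<rho>) is block diagonal for parity, hence so is every polynomial in it,
  in particular (Lagrange interpolation) each eigenprojector for a nonzero eigenvalue.
  Typicality of a sequence of eigenvectors depends only on the corresponding eigenvalues, none
  of which is 0, so the typical projector is a sum of tensor products of such eigenprojectors;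
  parity is additive under tensor products.

  For the second: in the occupation basis every field operator is a monomial matrix (one
  nonzero entry per column). Choosing, mode by mode, a number operator, its complement, a
  creator or an annihilator according to the occupations in x and y yields a product whose
  only nonzero entry is at (x, y). It has a single field operator exactly at the modes where
  x and y differ, so its length is even when x and y have the same parity.
\<close>

section \<open>Occupation numbers as bits\<close>

lemma occ_eq_bit: "occ n i j \<longleftrightarrow> bit j (n - 1 - i)"
  by (simp add: occ_def bit_iff_odd)

lemma bit_less_exp_nat: "(j::nat) < 2 ^ n \<Longrightarrow> bit j m \<Longrightarrow> m < n"
  by (metis bit_take_bit_iff take_bit_nat_eq_self_iff)

lemma set_bit_less_exp_nat: "k < n \<Longrightarrow> (j::nat) < 2 ^ n \<Longrightarrow> set_bit k j < 2 ^ n"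
  by (metis take_bit_nat_eq_self_iff take_bit_set_bit_eq not_le)

lemma eq_if_occ_eq:
  assumes "j < 2 ^ n" "j' < 2 ^ n" "\<forall>i<n. occ n i j = occ n i j'"
  shows "j = j'"
proof (rule bit_eqI)
  fix m
  show "bit j m = bit j' m"
  proof (cases "m < n")
    case True
    then have "n - 1 - m < n" "n - 1 - (n - 1 - m) = m" by auto
    then show ?thesis using assms(3) occ_eq_bit by metis
  next
    case False
    then show ?thesis using bit_less_exp_nat assms(1,2) by blast
  qed
qed

lemma unset_bit_add_exp_nat:
  assumes "bit (c::nat) k"
  shows "unset_bit k c + 2 ^ k = c"
proof -
  have "unset_bit k c + 2 ^ k = set_bit k (unset_bit k c)"
    using set_bit_eq[of k "unset_bit k c"] by (simp add: bit_unset_bit_iff)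
  also have "\<dots> = c"
    using assms by (intro bit_eqI) (auto simp: bit_set_bit_iff bit_unset_bit_iff)
  finally show ?thesis .
qed

lemma add_exp_eq_iff_unset_bit: "bit (c::nat) k \<Longrightarrow> r + 2 ^ k = c \<longleftrightarrow> r = unset_bit k c"
  using unset_bit_add_exp_nat by fastforce

lemma add_exp_eq_iff_set_bit:
  "bit (r::nat) k \<and> c + 2 ^ k = r \<longleftrightarrow> \<not> bit c k \<and> r = set_bit k c"
proof
  assume r: "bit r k \<and> c + 2 ^ k = r"
  then have "c = unset_bit k r" using add_exp_eq_iff_unset_bit by blast
  then show "\<not> bit c k \<and> r = set_bit k c"
    using r by (simp add: bit_unset_bit_iff set_bit_eq)
next
  assume c: "\<not> bit c k \<and> r = set_bit k c"
  then have "c + 2 ^ k = r" using set_bit_eq[of k c] by simp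
  moreover have "bit r k" using c by (simp add: bit_set_bit_iff)
  ultimately show "bit r k \<and> c + 2 ^ k = r" by simp
qed

lemma parity_eq_even_card_bits: "parity n a \<longleftrightarrow> even (card {m. m < n \<and> bit a m})"
proof -
  have image: "(\<lambda>k. n - 1 - k) ` {k. k < n \<and> occ n k a} = {m. m < n \<and> bit a m}"
  proof
    show "{m. m < n \<and> bit a m} \<subseteq> (\<lambda>k. n - 1 - k) ` {k. k < n \<and> occ n k a}"
    proof
      fix m assume "m \<in> {m. m < n \<and> bit a m}"
      then have "m = n - 1 - (n - 1 - m)" "n - 1 - m \<in> {k. k < n \<and> occ n k a}"
        by (auto simp: occ_eq_bit)
      then show "m \<in> (\<lambda>k. n - 1 - k) ` {k. k < n \<and> occ n k a}" by (rule image_eqI)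
    qed
  qed (auto simp: occ_eq_bit)
  have "inj_on (\<lambda>k. n - 1 - k) {k. k < n \<and> occ n k a}"
    by (auto simp: inj_on_def)
  from card_image[OF this, unfolded image] show ?thesis
    by (simp add: parity_def)
qed

lemma parity_add: "parity (m + n) a \<longleftrightarrow> (parity m (a div 2 ^ n) \<longleftrightarrow> parity n (a mod 2 ^ n))"
proof -
  have high: "bit (a div 2 ^ n) t = bit a (n + t)" for t
    by (simp add: bit_iff_odd power_add div_mult2_eq)
  have low: "bit (a mod 2 ^ n) k \<longleftrightarrow> k < n \<and> bit a k" for k
    by (metis bit_take_bit_iff take_bit_eq_mod)
  have "{k. k < m + n \<and> bit a k} = {k. k < n \<and> bit a k} \<union> (\<lambda>t. n + t) ` {t. t < m \<and> bit a (n + t)}"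
  proof
    show "{k. k < m + n \<and> bit a k} \<subseteq> {k. k < n \<and> bit a k} \<union> (\<lambda>t. n + t) ` {t. t < m \<and> bit a (n + t)}"
    proof
      fix k assume k: "k \<in> {k. k < m + n \<and> bit a k}"
      show "k \<in> {k. k < n \<and> bit a k} \<union> (\<lambda>t. n + t) ` {t. t < m \<and> bit a (n + t)}"
      proof (cases "k < n")
        case False
        then have "k = n + (k - n)" "k - n \<in> {t. t < m \<and> bit a (n + t)}" using k by auto
        then show ?thesis by blast
      qed (use k in auto)
    qed
  qed auto
  moreover have "card ({k. k < n \<and> bit a k} \<union> (\<lambda>t. n + t) ` {t. t < m \<and> bit a (n + t)}) =
      card {k. k < n \<and> bit a k} + card {t. t < m \<and> bit a (n + t)}"
    by (subst card_Un_disjoint) (auto simp: card_image)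
  ultimately show ?thesis
    unfolding parity_eq_even_card_bits high low by auto
qed

section \<open>Field operators as monomial matrices\<close>

definition monomial_mat :: "nat \<Rightarrow> complex mat \<Rightarrow> (nat \<Rightarrow> bool) \<Rightarrow> (nat \<Rightarrow> nat) \<Rightarrow> bool" where
  "monomial_mat D M P U \<longleftrightarrow> M \<in> carrier_mat D D \<and> (\<forall>j<D. P j \<longrightarrow> U j < D) \<and>
     (\<forall>i<D. \<forall>j<D. M $$ (i, j) \<noteq> 0 \<longleftrightarrow> P j \<and> i = U j)"

lemma monomial_mat_one: "monomial_mat D (1\<^sub>m D) (\<lambda>_. True) id"
  by (simp add: monomial_mat_def)

lemma index_mult_mat_single:
  assumes "A \<in> carrier_mat D D" "B \<in> carrier_mat D D" "i < D" "j < D" "e < D"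
    and "\<forall>e'<D. e' \<noteq> e \<longrightarrow> B $$ (e', j) = 0"
  shows "(A * B) $$ (i, j) = A $$ (i, e) * B $$ (e, j)"
proof -
  have "(A * B) $$ (i, j) = (\<Sum>e'\<in>{..<D}. A $$ (i, e') * B $$ (e', j))"
    using assms(1-4) by (simp add: scalar_prod_def lessThan_atLeast0)
  also have "\<dots> = A $$ (i, e) * B $$ (e, j)"
    using assms(5,6) by (subst sum.remove[of _ e]) (auto intro!: sum.neutral)
  finally show ?thesis .
qed

lemma monomial_mat_mult:
  assumes A: "monomial_mat D A PA UA" and B: "monomial_mat D B PB UB"
  shows "monomial_mat D (A * B) (\<lambda>j. PB j \<and> PA (UB j)) (UA \<circ> UB)"
  unfolding monomial_mat_def
proof (intro conjI allI impI)
  have cA: "A \<in> carrier_mat D D" and cB: "B \<in> carrier_mat D D"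
    using A B by (auto simp: monomial_mat_def)
  then show "A * B \<in> carrier_mat D D" by simp
  fix j assume j: "j < D"
  show "PB j \<and> PA (UB j) \<Longrightarrow> (UA \<circ> UB) j < D"
    using A B j by (auto simp: monomial_mat_def)
  fix i assume i: "i < D"
  show "(A * B) $$ (i, j) \<noteq> 0 \<longleftrightarrow> (PB j \<and> PA (UB j)) \<and> i = (UA \<circ> UB) j"
  proof (cases "PB j")
    case False
    then have "(A * B) $$ (i, j) = (\<Sum>e\<in>{..<D}. A $$ (i, e) * B $$ (e, j))"
      using cA cB i j by (simp add: scalar_prod_def lessThan_atLeast0)
    also have "\<dots> = 0"
      using B j False by (intro sum.neutral) (auto simp: monomial_mat_def)
    finally show ?thesis using False by simp
  next
    case True
    then have "UB j < D" "\<forall>e<D. e \<noteq> UB j \<longrightarrow> B $$ (e, j) = 0" "B $$ (UB j, j) \<noteq> 0"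
      using B j by (auto simp: monomial_mat_def)
    then have "(A * B) $$ (i, j) = A $$ (i, UB j) * B $$ (UB j, j)"
      using index_mult_mat_single[OF cA cB i j] by blast
    then show ?thesis
      using A \<open>UB j < D\<close> \<open>B $$ (UB j, j) \<noteq> 0\<close> True i by (auto simp: monomial_mat_def)
  qed
qed

lemma monomial_mat_field_op:
  assumes "i < n"
  shows "monomial_mat (2 ^ n) (field_op n i) (occ n i) (unset_bit (n - 1 - i))"
  unfolding monomial_mat_def
proof (intro conjI allI impI)
  show "field_op n i \<in> carrier_mat (2 ^ n) (2 ^ n)" by (simp add: field_op_def)
  fix c :: nat assume c: "c < 2 ^ n"
  show "occ n i c \<Longrightarrow> unset_bit (n - 1 - i) c < 2 ^ n"
    using c unset_bit_add_exp_nat[of c "n - 1 - i"] by (simp add: occ_eq_bit)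
  fix r :: nat assume r: "r < 2 ^ n"
  show "field_op n i $$ (r, c) \<noteq> 0 \<longleftrightarrow> occ n i c \<and> r = unset_bit (n - 1 - i) c"
    using r c add_exp_eq_iff_unset_bit by (auto simp: field_op_def occ_eq_bit)
qed

lemma monomial_mat_adj_field_op:
  assumes "i < n"
  shows "monomial_mat (2 ^ n) (adj (field_op n i)) (\<lambda>j. \<not> occ n i j) (set_bit (n - 1 - i))"
  unfolding monomial_mat_def
proof (intro conjI allI impI)
  show "adj (field_op n i) \<in> carrier_mat (2 ^ n) (2 ^ n)" by (simp add: adj_def field_op_def)
  fix c :: nat assume c: "c < 2 ^ n"
  show "\<not> occ n i c \<Longrightarrow> set_bit (n - 1 - i) c < 2 ^ n"
    using assms c by (simp add: set_bit_less_exp_nat)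
  fix r :: nat assume r: "r < 2 ^ n"
  have "adj (field_op n i) $$ (r, c) \<noteq> 0 \<longleftrightarrow> occ n i r \<and> c + 2 ^ (n - 1 - i) = r"
    using r c by (simp add: adj_def field_op_def)
  also have "\<dots> \<longleftrightarrow> \<not> occ n i c \<and> r = set_bit (n - 1 - i) c"
    unfolding occ_eq_bit by (rule add_exp_eq_iff_set_bit)
  finally show "adj (field_op n i) $$ (r, c) \<noteq> 0 \<longleftrightarrow> \<not> occ n i c \<and> r = set_bit (n - 1 - i) c" .
qed

lemma monomial_mat_field:
  assumes "i < n"
  shows "monomial_mat (2 ^ n) (field n (i, b)) (\<lambda>j. occ n i j \<noteq> b)
     (if b then set_bit (n - 1 - i) else unset_bit (n - 1 - i))"
  using monomial_mat_field_op[OF assms] monomial_mat_adj_field_op[OF assms]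
  by (cases b) (simp_all add: field_def)

lemma monomial_mat_cong:
  assumes "monomial_mat D M P U" "\<And>j. j < D \<Longrightarrow> P j \<longleftrightarrow> P' j"
    and "\<And>j. j < D \<Longrightarrow> P j \<Longrightarrow> U j = U' j"
  shows "monomial_mat D M P' U'"
  using assms by (auto simp: monomial_mat_def)

lemma field_carrier: "field n f \<in> carrier_mat (2 ^ n) (2 ^ n)"
  by (simp add: field_def field_op_def adj_def)

lemma field_prod_Nil: "field_prod n [] = 1\<^sub>m (2 ^ n)"
  by (simp add: field_prod_def)

lemma field_prod_Cons: "field_prod n (f # w) = field n f * field_prod n w"
  by (simp add: field_prod_def)

lemma field_prod_carrier: "field_prod n w \<in> carrier_mat (2 ^ n) (2 ^ n)"
  by (induction w) (auto simp: field_prod_Nil field_prod_Cons intro: mult_carrier_mat[OF field_carrier])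

lemma dim_field_prod [simp]:
  "dim_row (field_prod n w) = 2 ^ n" "dim_col (field_prod n w) = 2 ^ n"
  using field_prod_carrier[of n w] by auto

lemma field_prod_append: "field_prod n (w @ w') = field_prod n w * field_prod n w'"
proof (induction w)
  case Nil
  show ?case using field_prod_carrier[of n w'] by (simp add: field_prod_Nil)
next
  case (Cons f w)
  then show ?case
    by (simp add: field_prod_Cons assoc_mult_mat[OF field_carrier field_prod_carrier field_prod_carrier])
qed

lemma monomial_mat_field_prod_single:
  assumes "i < n"
  shows "monomial_mat (2 ^ n) (field_prod n [(i, b)]) (\<lambda>j. occ n i j \<noteq> b)
     (if b then set_bit (n - 1 - i) else unset_bit (n - 1 - i))"
  using monomial_mat_mult[OF monomial_mat_field[OF assms] monomial_mat_one]
  by (simp add: field_prod_Cons field_prod_Nil)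

text \<open>Sends occupation b' of mode i to b: a number operator or its complement if b = b',
  a single creator or annihilator otherwise.\<close>
definition mode_word :: "nat \<Rightarrow> bool \<Rightarrow> bool \<Rightarrow> (nat \<times> bool) list" where
  "mode_word i b b' = (if b = b' then [(i, b), (i, \<not> b)] else [(i, b)])"

lemma monomial_mat_mode_word:
  assumes "i < n"
  shows "monomial_mat (2 ^ n) (field_prod n (mode_word i b b')) (\<lambda>j. occ n i j = b')
     (if b then set_bit (n - 1 - i) else unset_bit (n - 1 - i))"
proof (cases "b = b'")
  case True
  let ?S = "\<lambda>c. if c then set_bit (n - 1 - i) else unset_bit (n - 1 - i)"
  have "field_prod n (mode_word i b b') = field_prod n [(i, b)] * field_prod n [(i, \<not> b)]"
    using True by (simp add: mode_word_def flip: field_prod_append)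
  moreover have "monomial_mat (2 ^ n) (field_prod n [(i, b)] * field_prod n [(i, \<not> b)])
     (\<lambda>j. occ n i j \<noteq> (\<not> b) \<and> occ n i (?S (\<not> b) j) \<noteq> b) (?S b \<circ> ?S (\<not> b))"
    by (rule monomial_mat_mult[OF monomial_mat_field_prod_single monomial_mat_field_prod_single])
      (use assms in simp_all)
  ultimately have "monomial_mat (2 ^ n) (field_prod n (mode_word i b b'))
     (\<lambda>j. occ n i j \<noteq> (\<not> b) \<and> occ n i (?S (\<not> b) j) \<noteq> b) (?S b \<circ> ?S (\<not> b))"
    by simp
  then show ?thesis
  proof (rule monomial_mat_cong)
    fix j
    show "occ n i j \<noteq> (\<not> b) \<and> occ n i (?S (\<not> b) j) \<noteq> b \<longleftrightarrow> occ n i j = b'"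
      using True by (cases b) (simp_all add: occ_eq_bit bit_set_bit_iff bit_unset_bit_iff)
    show "(?S b \<circ> ?S (\<not> b)) j = ?S b j" if "occ n i j \<noteq> (\<not> b) \<and> occ n i (?S (\<not> b) j) \<noteq> b"
      using that by (cases b) (auto simp: occ_eq_bit bit_set_bit_iff bit_unset_bit_iff intro!: bit_eqI)
  qed
next
  case False
  then show ?thesis
    using monomial_mat_field_prod_single[OF assms, of b]
    by (simp add: mode_word_def)
qed

fun transition_word :: "nat \<Rightarrow> nat \<Rightarrow> nat \<Rightarrow> nat list \<Rightarrow> (nat \<times> bool) list" where
  "transition_word n x y [] = []"
| "transition_word n x y (i # is) = mode_word i (occ n i x) (occ n i y) @ transition_word n x y is"

lemma monomial_mat_transition_word:
  assumes "distinct is" "\<forall>i\<in>set is. i < n"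
  shows "\<exists>U. monomial_mat (2 ^ n) (field_prod n (transition_word n x y is))
      (\<lambda>j. \<forall>i\<in>set is. occ n i j = occ n i y) U \<and>
    (\<forall>j. (\<forall>i\<in>set is. occ n i j = occ n i y) \<longrightarrow>
      (\<forall>l<n. occ n l (U j) = (if l \<in> set is then occ n l x else occ n l j)))"
  using assms
proof (induction "is")
  case Nil
  show ?case using monomial_mat_one[of "2 ^ n"] by (auto simp: field_prod_Nil intro!: exI[of _ id])
next
  case (Cons i "is")
  then have i: "i < n" "i \<notin> set is" by auto
  let ?S = "if occ n i x then set_bit (n - 1 - i) else unset_bit (n - 1 - i)"
  have occ_S: "occ n l (?S j) = (if l = i then occ n i x else occ n l j)" if "l < n" for l j
    using that i(1) by (auto simp: occ_eq_bit bit_set_bit_iff bit_unset_bit_iff)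
  obtain U where U: "monomial_mat (2 ^ n) (field_prod n (transition_word n x y is))
      (\<lambda>j. \<forall>i\<in>set is. occ n i j = occ n i y) U"
    "\<And>j l. \<forall>i\<in>set is. occ n i j = occ n i y \<Longrightarrow> l < n \<Longrightarrow>
      occ n l (U j) = (if l \<in> set is then occ n l x else occ n l j)"
    using Cons by auto
  have "monomial_mat (2 ^ n) (field_prod n (transition_word n x y (i # is)))
      (\<lambda>j. (\<forall>i\<in>set is. occ n i j = occ n i y) \<and> occ n i (U j) = occ n i y) (?S \<circ> U)"
    unfolding transition_word.simps field_prod_append
    by (rule monomial_mat_mult[OF monomial_mat_mode_word[OF i(1)] U(1)])
  then have "monomial_mat (2 ^ n) (field_prod n (transition_word n x y (i # is)))
      (\<lambda>j. \<forall>i\<in>set (i # is). occ n i j = occ n i y) (?S \<circ> U)"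
    by (rule monomial_mat_cong) (use U(2) i in auto)
  moreover have "occ n l ((?S \<circ> U) j) = (if l \<in> set (i # is) then occ n l x else occ n l j)"
    if "\<forall>i\<in>set (i # is). occ n i j = occ n i y" "l < n" for j l
    using that by (simp add: occ_S U(2))
  ultimately show ?case by blast
qed

lemma transition_word_modes:
  "\<forall>i\<in>set is. i < n \<Longrightarrow> \<forall>f\<in>set (transition_word n x y is). fst f < n"
  by (induction "is") (auto simp: mode_word_def)

lemma even_length_transition_word:
  assumes "distinct is"
  shows "even (length (transition_word n x y is)) \<longleftrightarrow>
    even (card {i \<in> set is. occ n i x \<noteq> occ n i y})"
  using assms
proof (induction "is")
  case Nil
  then show ?case by simp
next
  case (Cons i "is")
  let ?A = "\<lambda>is. {i \<in> set is. occ n i x \<noteq> occ n i y}"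
  have "?A (i # is) = (if occ n i x = occ n i y then ?A is else insert i (?A is))"
    by auto
  moreover have "card (insert i (?A is)) = Suc (card (?A is))"
    using Cons.prems by simp
  ultimately show ?case
    using Cons by (simp add: mode_word_def)
qed

lemma even_card_sym_diff:
  assumes "finite A" "finite B"
  shows "even (card ((A - B) \<union> (B - A))) \<longleftrightarrow> (even (card A) \<longleftrightarrow> even (card B))"
proof -
  have "card A = card (A \<inter> B) + card (A - B)"
    using assms(1) by (rule card_Int_Diff)
  moreover have "card B = card (A \<inter> B) + card (B - A)"
    using card_Int_Diff[OF assms(2), of A] by (simp add: Int_commute)
  moreover have "card ((A - B) \<union> (B - A)) = card (A - B) + card (B - A)"
    using assms by (intro card_Un_disjoint) auto
  ultimately show ?thesis by auto
qed

lemma matrix_unit_field_prod: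
  assumes x: "x < 2 ^ n" and y: "y < 2 ^ n" and par: "parity n x = parity n y"
  obtains w where "\<forall>f\<in>set w. fst f < n" "even (length w)"
    "\<And>i j. i < 2 ^ n \<Longrightarrow> j < 2 ^ n \<Longrightarrow> field_prod n w $$ (i, j) \<noteq> 0 \<longleftrightarrow> i = x \<and> j = y"
proof
  let ?w = "transition_word n x y [0..<n]"
  obtain U where U: "monomial_mat (2 ^ n) (field_prod n ?w)
      (\<lambda>j. \<forall>i\<in>set [0..<n]. occ n i j = occ n i y) U"
    "\<forall>j. (\<forall>i\<in>set [0..<n]. occ n i j = occ n i y) \<longrightarrow> (\<forall>l<n. occ n l (U j) = occ n l x)"
    using monomial_mat_transition_word[of "[0..<n]" n x y] by auto
  have "U y < 2 ^ n" using U(1) y by (simp add: monomial_mat_def)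
  then have "U y = x" using U(2) eq_if_occ_eq x by simp
  moreover have "(\<forall>i\<in>set [0..<n]. occ n i j = occ n i y) \<longleftrightarrow> j = y" if "j < 2 ^ n" for j
    using eq_if_occ_eq[OF that y] by auto
  ultimately show "field_prod n ?w $$ (i, j) \<noteq> 0 \<longleftrightarrow> i = x \<and> j = y"
    if "i < 2 ^ n" "j < 2 ^ n" for i j
    using U(1) that by (auto simp: monomial_mat_def)
  show "\<forall>f\<in>set ?w. fst f < n"
    using transition_word_modes[of "[0..<n]"] by simp
  let ?A = "{k. k < n \<and> occ n k x}" and ?B = "{k. k < n \<and> occ n k y}"
  have "{i \<in> set [0..<n]. occ n i x \<noteq> occ n i y} = (?A - ?B) \<union> (?B - ?A)"
    by auto
  then show "even (length ?w)"
    using even_length_transition_word[of "[0..<n]" n x y] even_card_sym_diff[of ?A ?B] par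
    by (simp add: parity_def)
qed

section \<open>Parity-preserving operators are even\<close>

definition parity_preserving :: "nat \<Rightarrow> complex mat \<Rightarrow> bool" where
  "parity_preserving n M \<longleftrightarrow> M \<in> carrier_mat (2 ^ n) (2 ^ n) \<and>
     (\<forall>a<2 ^ n. \<forall>b<2 ^ n. parity n a \<noteq> parity n b \<longrightarrow> M $$ (a, b) = 0)"

lemma foldr_add_mat_carrier:
  "\<forall>a\<in>set l. f a \<in> carrier_mat D D \<Longrightarrow> foldr (\<lambda>a S. f a + S) l (0\<^sub>m D D) \<in> carrier_mat D D"
  by (induction l) auto

lemma index_foldr_add_mat:
  assumes "\<forall>a\<in>set l. f a \<in> carrier_mat D D" "i < D" "j < D"
  shows "foldr (\<lambda>a S. f a + S) l (0\<^sub>m D D) $$ (i, j) = (\<Sum>a\<leftarrow>l. f a $$ (i, j))"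
  using assms
proof (induction l)
  case (Cons a l)
  then have "foldr (\<lambda>a S. f a + S) l (0\<^sub>m D D) \<in> carrier_mat D D"
    by (simp add: foldr_add_mat_carrier)
  with Cons show ?case by simp
qed simp

lemma eq_foldr_scaled_units:
  fixes M :: "'a::field mat"
  assumes M: "M \<in> carrier_mat D D" and "distinct l"
    and F: "\<And>ab. ab \<in> set l \<Longrightarrow> F ab \<in> carrier_mat D D \<and>
      (\<forall>i<D. \<forall>j<D. F ab $$ (i, j) \<noteq> 0 \<longleftrightarrow> (i, j) = ab)"
    and outside: "\<And>i j. i < D \<Longrightarrow> j < D \<Longrightarrow> (i, j) \<notin> set l \<Longrightarrow> M $$ (i, j) = 0"
  shows "M = foldr (\<lambda>ab S. (M $$ ab / F ab $$ ab) \<cdot>\<^sub>m F ab + S) l (0\<^sub>m D D)"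
    (is "M = ?S")
proof -
  have carrier: "\<forall>ab\<in>set l. (M $$ ab / F ab $$ ab) \<cdot>\<^sub>m F ab \<in> carrier_mat D D"
    using F by simp
  show ?thesis
  proof (rule eq_matI)
    fix i j assume "i < dim_row ?S" "j < dim_col ?S"
    then have i: "i < D" and j: "j < D"
      using foldr_add_mat_carrier[OF carrier] by auto
    have "?S $$ (i, j) = (\<Sum>ab\<leftarrow>l. ((M $$ ab / F ab $$ ab) \<cdot>\<^sub>m F ab) $$ (i, j))"
      by (rule index_foldr_add_mat[OF carrier i j])
    also have "\<dots> = (\<Sum>ab\<leftarrow>l. M $$ ab / F ab $$ ab * F ab $$ (i, j))"
    proof (intro arg_cong[where f = sum_list] map_cong refl)
      fix ab assume "ab \<in> set l"
      then have "F ab \<in> carrier_mat D D" using F by blast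
      then show "((M $$ ab / F ab $$ ab) \<cdot>\<^sub>m F ab) $$ (i, j) = M $$ ab / F ab $$ ab * F ab $$ (i, j)"
        using i j by simp
    qed
    also have "\<dots> = (\<Sum>ab\<in>set l. M $$ ab / F ab $$ ab * F ab $$ (i, j))"
      using \<open>distinct l\<close> by (rule sum_list_distinct_conv_sum_set)
    also have "\<dots> = (\<Sum>ab\<in>set l. if ab = (i, j) then M $$ (i, j) else 0)"
    proof (rule sum.cong[OF refl])
      fix ab assume "ab \<in> set l"
      then show "M $$ ab / F ab $$ ab * F ab $$ (i, j) = (if ab = (i, j) then M $$ (i, j) else 0)"
        using F[of ab] i j by auto
    qed
    also have "\<dots> = M $$ (i, j)"
      using outside i j by auto
    finally show "M $$ (i, j) = ?S $$ (i, j)" by simp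
  qed (use M foldr_add_mat_carrier[OF carrier] in auto)
qed

lemma foldr_scaled_field_prods_even_ops:
  assumes "\<And>a. a \<in> set l \<Longrightarrow> (\<forall>f\<in>set (w a). fst f < n) \<and> even (length (w a))"
  shows "foldr (\<lambda>a S. c a \<cdot>\<^sub>m field_prod n (w a) + S) l (0\<^sub>m (2 ^ n) (2 ^ n)) \<in> even_ops n"
proof -
  let ?cws = "map (\<lambda>a. (c a, w a)) l"
  have "foldr (\<lambda>a S. c a \<cdot>\<^sub>m field_prod n (w a) + S) l (0\<^sub>m (2 ^ n) (2 ^ n)) =
      foldr (\<lambda>(c, w) S. c \<cdot>\<^sub>m field_prod n w + S) ?cws (0\<^sub>m (2 ^ n) (2 ^ n))"
    by (simp add: foldr_map comp_def)
  moreover have "\<forall>(c, w)\<in>set ?cws. (\<forall>f\<in>set w. fst f < n) \<and> even (length w) = True"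
    using assms by auto
  ultimately show ?thesis
    unfolding even_ops_def parity_ops_def by blast
qed

lemma parity_preserving_even_ops:
  assumes "parity_preserving n M"
  shows "M \<in> even_ops n"
proof -
  let ?D = "2 ^ n :: nat"
  define pairs where "pairs = filter (\<lambda>(a, b). parity n a = parity n b) (List.product [0..<?D] [0..<?D])"
  have "\<exists>w. (\<forall>f\<in>set w. fst f < n) \<and> even (length w) \<and>
      (\<forall>i<?D. \<forall>j<?D. field_prod n w $$ (i, j) \<noteq> 0 \<longleftrightarrow> (i, j) = ab)" if "ab \<in> set pairs" for ab
  proof -
    obtain a b where "ab = (a, b)" by fastforce
    with that have ab: "ab = (a, b)" "a < ?D" "b < ?D" "parity n a = parity n b"
      by (simp_all add: pairs_def)
    obtain w where "\<forall>f\<in>set w. fst f < n" "even (length w)"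
      "\<And>i j. i < ?D \<Longrightarrow> j < ?D \<Longrightarrow> field_prod n w $$ (i, j) \<noteq> 0 \<longleftrightarrow> i = a \<and> j = b"
      using matrix_unit_field_prod[OF ab(2-4)] by blast
    then show ?thesis using ab(1) by auto
  qed
  then obtain w where w: "\<And>ab. ab \<in> set pairs \<Longrightarrow> (\<forall>f\<in>set (w ab). fst f < n) \<and> even (length (w ab)) \<and>
      (\<forall>i<?D. \<forall>j<?D. field_prod n (w ab) $$ (i, j) \<noteq> 0 \<longleftrightarrow> (i, j) = ab)"
    by metis
  have "M = foldr (\<lambda>ab S. (M $$ ab / field_prod n (w ab) $$ ab) \<cdot>\<^sub>m field_prod n (w ab) + S)
      pairs (0\<^sub>m ?D ?D)"
  proof (rule eq_foldr_scaled_units)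
    show "distinct pairs" by (simp add: pairs_def distinct_product)
  qed (use assms w field_prod_carrier in \<open>auto simp: parity_preserving_def pairs_def\<close>)
  also have "\<dots> \<in> even_ops n"
    by (rule foldr_scaled_field_prods_even_ops) (use w in blast)
  finally show ?thesis .
qed

section \<open>Eigenprojectors of a parity-preserving state\<close>

definition spectral_entry :: "nat \<Rightarrow> (nat \<Rightarrow> complex vec) \<Rightarrow> (nat \<Rightarrow> real) \<Rightarrow> nat \<Rightarrow> nat \<Rightarrow> complex" where
  "spectral_entry d x c a b = (\<Sum>i<d. complex_of_real (c i) * (x i $ a * cnj (x i $ b)))"

locale parity_preserving_state =
  fixes L :: nat and \<rho> :: "complex mat" and p :: "nat \<Rightarrow> real" and x :: "nat \<Rightarrow> complex vec"
  assumes parity_\<rho>: "parity_preserving L \<rho>" and eig: "eigendecomp (2 ^ L) \<rho> p x"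

context parity_preserving_state
begin

lemma eigvec_carrier: "i < 2 ^ L \<Longrightarrow> x i \<in> carrier_vec (2 ^ L)"
  using eig by (simp add: eigendecomp_def)

lemma dim_eigvec [simp]: "i < 2 ^ L \<Longrightarrow> dim_vec (x i) = 2 ^ L"
  using eigvec_carrier carrier_vecD by metis

lemma eigvec_orthonormal:
  assumes "k < 2 ^ L" "i < 2 ^ L"
  shows "(\<Sum>e<2 ^ L. cnj (x k $ e) * x i $ e) = (if i = k then 1 else 0)"
proof -
  have "conjugate (x k) \<bullet> x i = (if i = k then 1 else 0)"
    using eig assms by (simp add: eigendecomp_def)
  moreover have "conjugate (x k) \<bullet> x i = (\<Sum>e<2 ^ L. cnj (x k $ e) * x i $ e)"
    using eigvec_carrier[OF assms(1)] eigvec_carrier[OF assms(2)]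
    by (simp add: scalar_prod_def lessThan_atLeast0)
  ultimately show ?thesis by simp
qed

lemma index_\<rho>:
  assumes "a < 2 ^ L" "b < 2 ^ L"
  shows "\<rho> $$ (a, b) = spectral_entry (2 ^ L) x p a b"
proof -
  let ?f = "\<lambda>i. complex_of_real (p i) \<cdot>\<^sub>m outer (x i)"
  have carrier: "\<forall>i\<in>set [0..<2 ^ L]. ?f i \<in> carrier_mat (2 ^ L) (2 ^ L)"
    by (simp add: outer_def)
  have "\<rho> $$ (a, b) = (\<Sum>i\<leftarrow>[0..<2 ^ L]. ?f i $$ (a, b))"
    using eig index_foldr_add_mat[OF carrier assms] by (simp add: eigendecomp_def)
  also have "\<dots> = (\<Sum>i<2 ^ L. ?f i $$ (a, b))"
    by (simp add: sum_list_distinct_conv_sum_set lessThan_atLeast0)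
  also have "\<dots> = spectral_entry (2 ^ L) x p a b"
    unfolding spectral_entry_def
    using assms by (intro sum.cong refl) (simp add: outer_def)
  finally show ?thesis .
qed

lemma \<rho>_parity: "a < 2 ^ L \<Longrightarrow> b < 2 ^ L \<Longrightarrow> parity L a \<noteq> parity L b \<Longrightarrow> \<rho> $$ (a, b) = 0"
  using parity_\<rho> by (simp add: parity_preserving_def)

lemma \<rho>_mult_spectral_entry:
  assumes "a < 2 ^ L" "b < 2 ^ L"
  shows "(\<Sum>e<2 ^ L. \<rho> $$ (a, e) * spectral_entry (2 ^ L) x c e b) =
    spectral_entry (2 ^ L) x (\<lambda>i. p i * c i) a b"
proof -
  let ?d = "2 ^ L :: nat"
  let ?t = "\<lambda>k i. complex_of_real (p k) * x k $ a * complex_of_real (c i) * cnj (x i $ b)"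
  let ?F = "\<lambda>e k i. ?t k i * (cnj (x k $ e) * x i $ e)"
  have "(\<Sum>e<?d. \<rho> $$ (a, e) * spectral_entry ?d x c e b) =
      (\<Sum>e<?d. spectral_entry ?d x p a e * spectral_entry ?d x c e b)"
    using assms(1) by (intro sum.cong refl) (simp add: index_\<rho>)
  also have "\<dots> = (\<Sum>e<?d. \<Sum>k<?d. \<Sum>i<?d. ?F e k i)"
    unfolding spectral_entry_def sum_product by (intro sum.cong refl) (simp add: mult_ac)
  also have "\<dots> = (\<Sum>k<?d. \<Sum>e<?d. \<Sum>i<?d. ?F e k i)"
    by (rule sum.swap)
  also have "\<dots> = (\<Sum>k<?d. \<Sum>i<?d. \<Sum>e<?d. ?F e k i)"
    by (rule sum.cong[OF refl], rule sum.swap)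
  also have "\<dots> = (\<Sum>k<?d. \<Sum>i<?d. ?t k i * (\<Sum>e<?d. cnj (x k $ e) * x i $ e))"
    by (simp add: sum_distrib_left)
  also have "\<dots> = (\<Sum>k<?d. \<Sum>i<?d. if i = k then ?t k i else 0)"
    by (intro sum.cong refl) (simp add: eigvec_orthonormal)
  also have "\<dots> = spectral_entry ?d x (\<lambda>i. p i * c i) a b"
    unfolding spectral_entry_def by (intro sum.cong refl) (simp add: mult_ac)
  finally show ?thesis .
qed

text \<open>Multiplication by \<rho> preserves the vanishing of entries between states of different
  parity.\<close>
lemma spectral_entry_poly_parity:
  assumes "finite A" "a < 2 ^ L" "b < 2 ^ L" "parity L a \<noteq> parity L b"
  shows "spectral_entry (2 ^ L) x (\<lambda>i. p i * (\<Prod>\<mu>\<in>A. p i - \<mu>)) a b = 0"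
  using assms
proof (induction A arbitrary: a b rule: finite_induct)
  case empty
  then show ?case using index_\<rho> \<rho>_parity by simp
next
  case (insert \<mu> A)
  let ?c = "\<lambda>i. p i * (\<Prod>\<mu>\<in>A. p i - \<mu>)"
  let ?X = "\<lambda>i. x i $ a * cnj (x i $ b)"
  have "(\<Sum>e<2 ^ L. \<rho> $$ (a, e) * spectral_entry (2 ^ L) x ?c e b) = 0"
  proof (intro sum.neutral ballI)
    fix e :: nat assume "e \<in> {..<2 ^ L}"
    then show "\<rho> $$ (a, e) * spectral_entry (2 ^ L) x ?c e b = 0"
      using insert.IH[of e b] \<rho>_parity[of a e] insert.prems
      by (cases "parity L a = parity L e") simp_all
  qed
  then have higher: "spectral_entry (2 ^ L) x (\<lambda>i. p i * ?c i) a b = 0"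
    using \<rho>_mult_spectral_entry[OF insert.prems(1,2)] by simp
  have termwise: "complex_of_real (p i * (\<Prod>\<mu>\<in>insert \<mu> A. p i - \<mu>)) * ?X i =
      complex_of_real (p i * ?c i) * ?X i - complex_of_real \<mu> * (complex_of_real (?c i) * ?X i)" for i
  proof -
    have "p i * (\<Prod>\<mu>\<in>insert \<mu> A. p i - \<mu>) = p i * ?c i - \<mu> * ?c i"
      using insert.hyps by (simp add: algebra_simps)
    then have "complex_of_real (p i * (\<Prod>\<mu>\<in>insert \<mu> A. p i - \<mu>)) =
        complex_of_real (p i * ?c i) - complex_of_real \<mu> * complex_of_real (?c i)"
      by (simp only: of_real_diff of_real_mult)
    then show ?thesis by (simp only: left_diff_distrib mult.assoc)
  qed
  have "spectral_entry (2 ^ L) x (\<lambda>i. p i * (\<Prod>\<mu>\<in>insert \<mu> A. p i - \<mu>)) a b =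
      spectral_entry (2 ^ L) x (\<lambda>i. p i * ?c i) a b - complex_of_real \<mu> * spectral_entry (2 ^ L) x ?c a b"
    unfolding spectral_entry_def termwise by (simp only: sum_subtractf sum_distrib_left)
  also have "\<dots> = 0"
    unfolding higher insert.IH[OF insert.prems] by simp
  finally show ?case .
qed

text \<open>Lagrange interpolation: up to the factor \<nu> K, the eigenprojector for \<nu> \<noteq> 0 is
  \<rho> \<Prod>(\<rho> - \<mu>) over the other eigenvalues \<mu>.\<close>
lemma eigenprojector_parity:
  assumes "\<nu> \<noteq> 0" "a < 2 ^ L" "b < 2 ^ L" "parity L a \<noteq> parity L b"
  shows "(\<Sum>i\<in>{i \<in> {..<2 ^ L}. p i = \<nu>}. x i $ a * cnj (x i $ b)) = 0"
proof -
  define A where "A = p ` {..<2 ^ L} - {\<nu>}"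
  define K where "K = (\<Prod>\<mu>\<in>A. \<nu> - \<mu>)"
  have "finite A" by (simp add: A_def)
  have "K \<noteq> 0" unfolding K_def A_def by (simp add: prod_zero_iff)
  have c: "p i * (\<Prod>\<mu>\<in>A. p i - \<mu>) = (if p i = \<nu> then \<nu> * K else 0)" if "i < 2 ^ L" for i
  proof (cases "p i = \<nu>")
    case False
    then have "p i \<in> A" using that by (simp add: A_def)
    then have "(\<Prod>\<mu>\<in>A. p i - \<mu>) = 0" using \<open>finite A\<close> by (simp add: prod_zero_iff)
    then show ?thesis using False by simp
  qed (simp add: K_def)
  have "0 = spectral_entry (2 ^ L) x (\<lambda>i. p i * (\<Prod>\<mu>\<in>A. p i - \<mu>)) a b"
    using spectral_entry_poly_parity[OF \<open>finite A\<close> assms(2-4)] by simp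
  also have "\<dots> = (\<Sum>i<2 ^ L. if p i = \<nu> then complex_of_real (\<nu> * K) * (x i $ a * cnj (x i $ b)) else 0)"
    unfolding spectral_entry_def by (intro sum.cong refl) (simp add: c)
  also have "\<dots> = (\<Sum>i\<in>{i \<in> {..<2 ^ L}. p i = \<nu>}. complex_of_real (\<nu> * K) * (x i $ a * cnj (x i $ b)))"
    by (rule sum.inter_filter[symmetric]) simp
  also have "\<dots> = complex_of_real (\<nu> * K) * (\<Sum>i\<in>{i \<in> {..<2 ^ L}. p i = \<nu>}. x i $ a * cnj (x i $ b))"
    by (rule sum_distrib_left[symmetric])
  finally show ?thesis using assms(1) \<open>K \<noteq> 0\<close> by simp
qed

lemma eigvec_sum_parity:
  assumes "\<And>i j. i < 2 ^ L \<Longrightarrow> j < 2 ^ L \<Longrightarrow> p i = p j \<Longrightarrow> Q i = Q j"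
    and "\<And>i. i < 2 ^ L \<Longrightarrow> Q i \<Longrightarrow> p i \<noteq> 0"
    and "a < 2 ^ L" "b < 2 ^ L" "parity L a \<noteq> parity L b"
  shows "(\<Sum>i<2 ^ L. if Q i then x i $ a * cnj (x i $ b) else 0) = 0"
proof -
  let ?G = "\<lambda>i. if Q i then x i $ a * cnj (x i $ b) else 0"
  have "(\<Sum>i<2 ^ L. ?G i) = (\<Sum>\<nu>\<in>p ` {..<2 ^ L}. \<Sum>i\<in>{i \<in> {..<2 ^ L}. p i = \<nu>}. ?G i)"
    by (rule sum.image_gen) simp
  also have "\<dots> = 0"
  proof (rule sum.neutral, rule ballI)
    fix \<nu> assume "\<nu> \<in> p ` {..<2 ^ L}"
    then obtain i0 where i0: "i0 < 2 ^ L" "p i0 = \<nu>" by auto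
    show "(\<Sum>i\<in>{i \<in> {..<2 ^ L}. p i = \<nu>}. ?G i) = 0"
    proof (cases "Q i0")
      case False
      show ?thesis
      proof (intro sum.neutral ballI)
        fix i assume "i \<in> {i \<in> {..<2 ^ L}. p i = \<nu>}"
        then have "Q i = Q i0" using assms(1)[of i i0] i0 by simp
        then show "?G i = 0" using False by simp
      qed
    next
      case True
      have "(\<Sum>i\<in>{i \<in> {..<2 ^ L}. p i = \<nu>}. ?G i) =
          (\<Sum>i\<in>{i \<in> {..<2 ^ L}. p i = \<nu>}. x i $ a * cnj (x i $ b))"
      proof (rule sum.cong[OF refl])
        fix i assume "i \<in> {i \<in> {..<2 ^ L}. p i = \<nu>}"
        then have "Q i = Q i0" using assms(1)[of i i0] i0 by simp
        then show "?G i = x i $ a * cnj (x i $ b)" using True by simp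
      qed
      also have "\<dots> = 0"
        using eigenprojector_parity[OF _ assms(3-5)] assms(2)[OF i0(1) True] i0(2) by simp
      finally show ?thesis .
    qed
  qed
  finally show ?thesis .
qed

end

section \<open>The typical projector\<close>

lemma sum_lists_length_Suc:
  assumes "finite A"
  shows "(\<Sum>zs | set zs \<subseteq> A \<and> length zs = Suc N. f zs) =
    (\<Sum>ys | set ys \<subseteq> A \<and> length ys = N. \<Sum>i\<in>A. f (i # ys))"
proof -
  have "(\<Sum>zs | set zs \<subseteq> A \<and> length zs = Suc N. f zs) =
      (\<Sum>(ys, i)\<in>{ys. set ys \<subseteq> A \<and> length ys = N} \<times> A. f (i # ys))"
    unfolding lists_length_Suc_eq sum.reindex[OF inj_split_Cons] by (simp add: comp_def case_prod_unfold)
  also have "\<dots> = (\<Sum>ys | set ys \<subseteq> A \<and> length ys = N. \<Sum>i\<in>A. f (i # ys))"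
    by (rule sum.cartesian_product[symmetric])
  finally show ?thesis .
qed

lemma seq_prob_map_eq:
  assumes "map p zs = map p js"
  shows "seq_prob p zs = seq_prob p js"
proof -
  have "length zs = length js" using arg_cong[OF assms, of length] by simp
  moreover have "p (zs ! j) = p (js ! j)" if "j < length zs" for j
  proof -
    have "map p zs ! j = map p js ! j" using assms by simp
    then show ?thesis using that \<open>length zs = length js\<close> by simp
  qed
  ultimately show ?thesis
    unfolding seq_prob_def by (intro prod.cong) auto
qed

lemma seq_prob_pos_imp:
  assumes "seq_prob p zs > 0" "i \<in> set zs"
  shows "p i \<noteq> 0"
proof
  assume "p i = 0"
  moreover obtain j where "j < length zs" "zs ! j = i"
    using assms(2) by (auto simp: in_set_conv_nth)
  ultimately have "seq_prob p zs = 0"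
    unfolding seq_prob_def by (intro prod_zero) auto
  with assms(1) show False by simp
qed

context parity_preserving_state
begin

lemma dim_tensor_seq: "set zs \<subseteq> {..<2 ^ L} \<Longrightarrow> dim_vec (tensor_seq x zs) = 2 ^ (length zs * L)"
  by (induction zs) (auto simp: tensor_seq_def kron_vec_def power_add)

lemma index_tensor_seq_Cons:
  assumes "set ys \<subseteq> {..<2 ^ L}" "i < 2 ^ L" "a < 2 ^ (Suc (length ys) * L)"
  shows "tensor_seq x (i # ys) $ a =
    x i $ (a div 2 ^ (length ys * L)) * tensor_seq x ys $ (a mod 2 ^ (length ys * L))"
  using assms dim_tensor_seq[OF assms(1)] by (simp add: tensor_seq_def kron_vec_def power_add)

lemma sum_tensor_seq_Suc:
  assumes "a < 2 ^ (Suc N * L)" "b < 2 ^ (Suc N * L)"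
  shows "(\<Sum>zs | set zs \<subseteq> {..<2 ^ L} \<and> length zs = Suc N.
      if T zs then tensor_seq x zs $ a * cnj (tensor_seq x zs $ b) else 0) =
    (\<Sum>ys | set ys \<subseteq> {..<2 ^ L} \<and> length ys = N. \<Sum>i<2 ^ L.
      if T (i # ys) then x i $ (a div 2 ^ (N * L)) * cnj (x i $ (b div 2 ^ (N * L))) *
        (tensor_seq x ys $ (a mod 2 ^ (N * L)) * cnj (tensor_seq x ys $ (b mod 2 ^ (N * L))))
      else 0)"
  unfolding sum_lists_length_Suc[OF finite_lessThan]
  using assms by (intro sum.cong refl) (simp add: index_tensor_seq_Cons mult_ac)

lemma sum_tensor_head_parity:
  assumes "\<And>zs js. map p zs = map p js \<Longrightarrow> T zs = T js"
    and "\<And>zs i. T zs \<Longrightarrow> i \<in> set zs \<Longrightarrow> p i \<noteq> 0"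
    and "a < 2 ^ L" "b < 2 ^ L" "parity L a \<noteq> parity L b"
  shows "(\<Sum>ys\<in>S. \<Sum>i<2 ^ L. if T (i # ys) then x i $ a * cnj (x i $ b) * Y ys else 0) = 0"
proof -
  have "(\<Sum>i<2 ^ L. if T (i # ys) then x i $ a * cnj (x i $ b) else 0) = 0" for ys
  proof (rule eigvec_sum_parity)
    show "T (i # ys) = T (j # ys)" if "p i = p j" for i j
      using assms(1)[of "i # ys" "j # ys"] that by simp
    show "p i \<noteq> 0" if "T (i # ys)" for i
      using assms(2)[of "i # ys" i] that by simp
  qed (use assms(3-5) in simp_all)
  then have "(\<Sum>ys\<in>S. Y ys * (\<Sum>i<2 ^ L. if T (i # ys) then x i $ a * cnj (x i $ b) else 0)) = 0"
    by simp
  moreover have "(\<Sum>ys\<in>S. \<Sum>i<2 ^ L. if T (i # ys) then x i $ a * cnj (x i $ b) * Y ys else 0) =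
      (\<Sum>ys\<in>S. Y ys * (\<Sum>i<2 ^ L. if T (i # ys) then x i $ a * cnj (x i $ b) else 0))"
    unfolding sum_distrib_left by (intro sum.cong refl) simp
  ultimately show ?thesis by simp
qed

lemma tensor_sum_parity:
  assumes "\<And>zs js. map p zs = map p js \<Longrightarrow> T zs = T js"
    and "\<And>zs i. T zs \<Longrightarrow> i \<in> set zs \<Longrightarrow> p i \<noteq> 0"
    and "a < 2 ^ (N * L)" "b < 2 ^ (N * L)" "parity (N * L) a \<noteq> parity (N * L) b"
  shows "(\<Sum>zs | set zs \<subseteq> {..<2 ^ L} \<and> length zs = N.
    if T zs then tensor_seq x zs $ a * cnj (tensor_seq x zs $ b) else 0) = 0"
  using assms
proof (induction N arbitrary: T a b)
  case 0
  show ?case using 0(3-5) by simp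
next
  case (Suc N)
  define D where "D = (2 :: nat) ^ (N * L)"
  have "a < 2 ^ L * D" "b < 2 ^ L * D"
    using Suc.prems(3,4) by (simp_all add: D_def power_add)
  then have bounds: "a div D < 2 ^ L" "b div D < 2 ^ L" "a mod D < D" "b mod D < D"
    by (simp_all add: less_mult_imp_div_less mult.commute D_def)
  let ?X = "\<lambda>i. x i $ (a div D) * cnj (x i $ (b div D))"
  let ?Y = "\<lambda>ys. tensor_seq x ys $ (a mod D) * cnj (tensor_seq x ys $ (b mod D))"
  let ?S = "{ys. set ys \<subseteq> {..<2 ^ L} \<and> length ys = N}"
  have "(\<Sum>zs | set zs \<subseteq> {..<2 ^ L} \<and> length zs = Suc N.
      if T zs then tensor_seq x zs $ a * cnj (tensor_seq x zs $ b) else 0) =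
    (\<Sum>ys\<in>?S. \<Sum>i<2 ^ L. if T (i # ys) then ?X i * ?Y ys else 0)"
    unfolding D_def by (rule sum_tensor_seq_Suc[OF Suc.prems(3,4)])
  also have "\<dots> = 0"
  proof (cases "parity L (a div D) = parity L (b div D)")
    case True
    moreover have "parity (Suc N * L) c \<longleftrightarrow> (parity L (c div D) \<longleftrightarrow> parity (N * L) (c mod D))" for c
      using parity_add[of L "N * L" c] by (simp add: D_def)
    ultimately have "parity (N * L) (a mod D) \<noteq> parity (N * L) (b mod D)"
      using Suc.prems(5) by blast
    then have "(\<Sum>ys\<in>?S. if T (i # ys) then ?Y ys else 0) = 0" for i
    proof (intro Suc.IH)
      show "T (i # zs) = T (i # js)" if "map p zs = map p js" for zs js
        using Suc.prems(1)[of "i # zs" "i # js"] that by simp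
      show "p k \<noteq> 0" if "T (i # zs)" "k \<in> set zs" for zs k
        using Suc.prems(2)[of "i # zs" k] that by simp
    qed (use bounds in \<open>simp_all add: D_def\<close>)
    moreover have "(\<Sum>ys\<in>?S. \<Sum>i<2 ^ L. if T (i # ys) then ?X i * ?Y ys else 0) =
        (\<Sum>i<2 ^ L. ?X i * (\<Sum>ys\<in>?S. if T (i # ys) then ?Y ys else 0))"
      unfolding sum_distrib_left by (subst sum.swap) (intro sum.cong refl; simp)
    ultimately show ?thesis by simp
  next
    case False
    show ?thesis
    proof (rule sum_tensor_head_parity)
      show "T zs = T js" if "map p zs = map p js" for zs js
        by (rule Suc.prems(1)[OF that])
      show "p i \<noteq> 0" if "T zs" "i \<in> set zs" for zs i
        by (rule Suc.prems(2)[OF that])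
    qed (use bounds False in simp_all)
  qed
  finally show ?case .
qed

lemma parity_preserving_typical_proj: "parity_preserving (N * L) (typical_proj (2 ^ L) p x N \<epsilon>)"
proof -
  let ?D = "(2 ^ L) ^ N :: nat"
  let ?T = "typical (2 ^ L) p N \<epsilon>"
  let ?S = "{zs. set zs \<subseteq> {..<2 ^ L} \<and> length zs = N}"
  let ?seqs = "filter ?T (List.n_lists N [0..<2 ^ L])"
  have D: "?D = 2 ^ (N * L)" by (simp add: power_mult[symmetric] mult.commute)
  have set_seqs: "set ?seqs = {zs \<in> ?S. ?T zs}"
    by (auto simp: set_n_lists atLeast0LessThan)
  have dim: "dim_vec (tensor_seq x zs) = ?D" if "zs \<in> set ?seqs" for zs
  proof -
    have "set zs \<subseteq> {..<2 ^ L}" "length zs = N"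
      using that unfolding set_seqs by auto
    then show ?thesis using dim_tensor_seq D by simp
  qed
  have carrier: "\<forall>zs\<in>set ?seqs. outer (tensor_seq x zs) \<in> carrier_mat ?D ?D"
    using dim by (simp add: outer_def)
  have P: "typical_proj (2 ^ L) p x N \<epsilon> = foldr (\<lambda>zs S. outer (tensor_seq x zs) + S) ?seqs (0\<^sub>m ?D ?D)"
    unfolding typical_proj_def Let_def ..
  show ?thesis
    unfolding parity_preserving_def
  proof (intro conjI allI impI)
    show "typical_proj (2 ^ L) p x N \<epsilon> \<in> carrier_mat (2 ^ (N * L)) (2 ^ (N * L))"
      using foldr_add_mat_carrier[OF carrier] by (simp add: P D)
    fix a b assume ab: "a < 2 ^ (N * L)" "b < 2 ^ (N * L)"
      and par: "parity (N * L) a \<noteq> parity (N * L) b"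
    then have a: "a < ?D" and b: "b < ?D" by (simp_all add: D)
    have "typical_proj (2 ^ L) p x N \<epsilon> $$ (a, b) = (\<Sum>zs\<leftarrow>?seqs. outer (tensor_seq x zs) $$ (a, b))"
      unfolding P by (rule index_foldr_add_mat[OF carrier a b])
    also have "\<dots> = (\<Sum>zs\<in>set ?seqs. outer (tensor_seq x zs) $$ (a, b))"
      by (rule sum_list_distinct_conv_sum_set) (simp add: distinct_n_lists)
    also have "\<dots> = (\<Sum>zs\<in>set ?seqs. tensor_seq x zs $ a * cnj (tensor_seq x zs $ b))"
      using a b dim by (intro sum.cong refl) (simp add: outer_def)
    also have "\<dots> = (\<Sum>zs\<in>?S. if ?T zs then tensor_seq x zs $ a * cnj (tensor_seq x zs $ b) else 0)"
      unfolding set_seqs by (rule sum.inter_filter) (simp add: finite_lists_length_eq)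
    also have "\<dots> = 0"
    proof (rule tensor_sum_parity)
      show "?T zs = ?T js" if "map p zs = map p js" for zs js
        using seq_prob_map_eq[OF that] by (simp add: typical_def)
      show "p i \<noteq> 0" if "?T zs" "i \<in> set zs" for zs i
        using that seq_prob_pos_imp[of p zs i] by (simp add: typical_def)
    qed (rule ab par)+
    finally show "typical_proj (2 ^ L) p x N \<epsilon> $$ (a, b) = 0" .
  qed
qed

end

theorem lemma1:
  fixes L N :: nat and \<rho> :: "complex mat" and \<epsilon> :: real
    and p :: "nat \<Rightarrow> real" and x :: "nat \<Rightarrow> complex vec"
  assumes "fermionic_state L \<rho>"
    and "eigendecomp (2 ^ L) \<rho> p x"
    and "N \<ge> 1" and "\<epsilon> > 0"
  shows "\<exists>Ks. admissible_kraus (N * L) Ks \<and> typical_proj (2 ^ L) p x N \<epsilon> \<in> set Ks"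
proof -
  have "parity_preserving L \<rho>"
    using assms(1) by (simp add: fermionic_state_def psd_def parity_preserving_def)
  then have "parity_preserving_state L \<rho> p x"
    using assms(2) by (rule parity_preserving_state.intro)
  then have "parity_preserving (N * L) (typical_proj (2 ^ L) p x N \<epsilon>)"
    by (rule parity_preserving_state.parity_preserving_typical_proj)
  then have "admissible_kraus (N * L) [typical_proj (2 ^ L) p x N \<epsilon>]"
    by (simp add: admissible_kraus_def parity_preserving_even_ops)
  then show ?thesis by force
qed

end
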